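(* Let $p$ be an odd prime, let $S=\{q_1,q_2,q_3\}$ be a set of three primes with $q_i\equiv 1 \pmod p$ and $q_i\not\equiv 1\pmod{p^2}$, and let $n<p$. Then the linking algebra $\mathfrak l_S$ fails to have Property $FM(n)$ if and only if $\ell_{ij}\ne0$ for all $i\ne j$ and $$\ell_{13}/c_1=-\ell_{23}/c_2,\quad \ell_{21}/c_2=-\ell_{31}/c_3,\quad \ell_{12}/c_1=-\ell_{32}/c_3.$$
   Context: For $i\ne j$, choose a primitive root $g_j$ modulo $q_j$; the linking number $\ell_{ij}\in\mathbb{F}_p$ is defined by $q_i\equiv g_j^{-\ell_{ij}}\pmod{q_j}$. Let $c_i=(q_i-1)/p \bmod p\in\mathbb{F}_p^*$. The linking algebra $\mathfrak l_S$ is the Lie algebra over $\mathbb{F}_p$ generated by $\xi_1,\xi_2,\xi_3$ subject to the relations $c_i\xi_i+\sum_{j\ne i}\ell_{ij}[\xi_i,\xi_j]=0$, $i=1,2,3$. A Lie algebra $\mathfrak g$ over a field $F$ has Property $FM(n)$ if every Lie algebra homomorphism $\mathfrak g\to\mathfrak{gl}_n(F)$ is zero. *)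

theory Defs
  imports "HOL-Number_Theory.Number_Theory"
          "Jordan_Normal_Form.Matrix"
          "Berlekamp_Zassenhaus.Finite_Field"
begin

text \<open>The field F_p is the type 'p mod_ring, where 'p :: prime_card and p = CARD('p).
  gl_n(F) is realised as the n x n matrices (carrier_mat n n) with the commutator bracket.\<close>

definition lie_br :: "'a::comm_ring mat \<Rightarrow> 'a mat \<Rightarrow> 'a mat" where
  "lie_br A B = A * B - B * A"

text \<open>The linking algebra l_S is the Lie algebra generated by xi_1, xi_2, xi_3 subject to
  c_i xi_i + sum_{j ~= i} l_ij [xi_i, xi_j] = 0.  By the universal property of a presentation,
  a Lie algebra homomorphism l_S -> gl_n(F) is the same as a triple (X 1, X 2, X 3) of n x n
  matrices (the images of the generators) satisfying the defining relations; the homomorphism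
  is zero iff all X i are zero.\<close>

definition linking_rel_holds ::
  "nat \<Rightarrow> (nat \<Rightarrow> 'a::field) \<Rightarrow> (nat \<Rightarrow> nat \<Rightarrow> 'a) \<Rightarrow> (nat \<Rightarrow> 'a mat) \<Rightarrow> bool" where
  "linking_rel_holds n c l X \<longleftrightarrow>
     (\<forall>i\<in>{1,2,3}. X i \<in> carrier_mat n n) \<and>
     c 1 \<cdot>\<^sub>m X 1 + l 1 2 \<cdot>\<^sub>m lie_br (X 1) (X 2) + l 1 3 \<cdot>\<^sub>m lie_br (X 1) (X 3) = 0\<^sub>m n n \<and>
     c 2 \<cdot>\<^sub>m X 2 + l 2 1 \<cdot>\<^sub>m lie_br (X 2) (X 1) + l 2 3 \<cdot>\<^sub>m lie_br (X 2) (X 3) = 0\<^sub>m n n \<and>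
     c 3 \<cdot>\<^sub>m X 3 + l 3 1 \<cdot>\<^sub>m lie_br (X 3) (X 1) + l 3 2 \<cdot>\<^sub>m lie_br (X 3) (X 2) = 0\<^sub>m n n"

definition linking_algebra_FM ::
  "nat \<Rightarrow> (nat \<Rightarrow> 'a::field) \<Rightarrow> (nat \<Rightarrow> nat \<Rightarrow> 'a) \<Rightarrow> bool" where
  "linking_algebra_FM n c l \<longleftrightarrow>
     (\<forall>X. linking_rel_holds n c l X \<longrightarrow> (\<forall>i\<in>{1,2,3}. X i = 0\<^sub>m n n))"

end

theory Submission
  imports Defs
begin

text \<open>Let \<open>X\<^sub>1, X\<^sub>2, X\<^sub>3\<close> be the images of the generators and \<open>A = [X\<^sub>1,X\<^sub>2]\<close>, \<open>B = [X\<^sub>2,X\<^sub>3]\<close>,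
  \<open>C = [X\<^sub>3,X\<^sub>1]\<close>. The defining relations form a linear system expressing \<open>c\<^sub>i X\<^sub>i\<close> through
  \<open>A, B, C\<close>; solving it with Cramer's rule and substituting into the Jacobi identity yields a
  linear relation \<open>j\<^sub>1 A + j\<^sub>2 B + j\<^sub>3 C = 0\<close> with explicit coefficients. In a nonzero
  representation the \<open>X\<^sub>i\<close> are linearly independent: if one lies in the span of the other
  two, the relations make both of these multiples of their own bracket, hence zero. So a
  nonzero representation forces the determinant of the system to be nonzero and all \<open>j\<^sub>i\<close>
  to vanish, which amounts to the ratio conditions. Conversely, under the ratio conditions the
  relations are satisfied by a copy of \<open>sl\<^sub>2\<close> in the corner of \<open>gl\<^sub>n\<close>.\<close>

lemma zero_smult_mat:
  "A \<in> carrier_mat nr nc \<Longrightarrow> (0 :: 'a::semiring_0) \<cdot>\<^sub>m A = 0\<^sub>m nr nc"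
  by (rule eq_matI) auto

lemma add_mat_swap_right:
  "A \<in> carrier_mat nr nc \<Longrightarrow> B \<in> carrier_mat nr nc \<Longrightarrow> C \<in> carrier_mat nr nc \<Longrightarrow>
    A + B + C = A + C + (B :: 'a::ab_semigroup_add mat)"
  by (rule eq_matI) (auto simp: ac_simps)

lemma add_mat_rotate:
  "A \<in> carrier_mat nr nc \<Longrightarrow> B \<in> carrier_mat nr nc \<Longrightarrow> C \<in> carrier_mat nr nc \<Longrightarrow>
    A + B + C = B + C + (A :: 'a::ab_semigroup_add mat)"
  by (rule eq_matI) (auto simp: ac_simps)

lemma smult_add3_eq_zero_solve:
  fixes U V W :: "'a::field mat"
  assumes carr: "U \<in> carrier_mat nr nc" "V \<in> carrier_mat nr nc" "W \<in> carrier_mat nr nc"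
    and eq: "k1 \<cdot>\<^sub>m U + k2 \<cdot>\<^sub>m V + k3 \<cdot>\<^sub>m W = 0\<^sub>m nr nc" and k3: "k3 \<noteq> 0"
  shows "W = (- k1 / k3) \<cdot>\<^sub>m U + (- k2 / k3) \<cdot>\<^sub>m V" (is "_ = ?R")
proof (rule eq_matI)
  fix i j assume "i < dim_row ?R" "j < dim_col ?R"
  then have ij: "i < nr" "j < nc" using carr by auto
  have "(k1 \<cdot>\<^sub>m U + k2 \<cdot>\<^sub>m V + k3 \<cdot>\<^sub>m W) $$ (i, j) = 0"
    using eq ij by simp
  then show "W $$ (i, j) = ?R $$ (i, j)"
    using carr ij k3 by (simp add: field_simps) (simp add: eq_neg_iff_add_eq_0 algebra_simps)
qed (use carr in auto)

lemma lie_br_carrier [simp]: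
  "X \<in> carrier_mat n n \<Longrightarrow> Y \<in> carrier_mat n n \<Longrightarrow> lie_br X Y \<in> carrier_mat n n"
  unfolding lie_br_def by auto

lemma dim_lie_br [simp]:
  "dim_row (lie_br X Y) = dim_row Y" "dim_col (lie_br X Y) = dim_col X"
  unfolding lie_br_def by simp_all

lemma lie_br_self:
  "X \<in> carrier_mat n n \<Longrightarrow> lie_br X X = 0\<^sub>m n n"
  unfolding lie_br_def by (rule eq_matI) auto

lemma lie_br_antisym:
  "X \<in> carrier_mat n n \<Longrightarrow> Y \<in> carrier_mat n n \<Longrightarrow> lie_br Y X = - lie_br X Y"
  unfolding lie_br_def by (rule eq_matI) auto

lemma lie_br_smult_left:
  assumes "X \<in> carrier_mat n n" "Y \<in> carrier_mat n n"
  shows "lie_br (a \<cdot>\<^sub>m X) Y = a \<cdot>\<^sub>m lie_br X Y"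
  using assms unfolding lie_br_def
  by (simp add: mult_smult_distrib[of _ n n _ n] mult_smult_assoc_mat[of _ n n _ n])
    (rule eq_matI; simp add: algebra_simps)

lemma lie_br_smult_right:
  assumes "X \<in> carrier_mat n n" "Y \<in> carrier_mat n n"
  shows "lie_br X (a \<cdot>\<^sub>m Y) = a \<cdot>\<^sub>m lie_br X Y"
  using assms unfolding lie_br_def
  by (simp add: mult_smult_distrib[of _ n n _ n] mult_smult_assoc_mat[of _ n n _ n])
    (rule eq_matI; simp add: algebra_simps)

lemma lie_br_add_right:
  assumes "X \<in> carrier_mat n n" "Y \<in> carrier_mat n n" "Z \<in> carrier_mat n n"
  shows "lie_br X (Y + Z) = lie_br X Y + lie_br X Z"
  using assms unfolding lie_br_def
  by (simp add: mult_add_distrib_mat[of _ n n] add_mult_distrib_mat[of _ n n])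
    (rule eq_matI; simp add: algebra_simps)

lemma lie_br_lin_comb_right:
  assumes "X \<in> carrier_mat n n" "Y1 \<in> carrier_mat n n" "Y2 \<in> carrier_mat n n" "Y3 \<in> carrier_mat n n"
  shows "lie_br X (b1 \<cdot>\<^sub>m Y1 + b2 \<cdot>\<^sub>m Y2 + b3 \<cdot>\<^sub>m Y3) =
    b1 \<cdot>\<^sub>m lie_br X Y1 + b2 \<cdot>\<^sub>m lie_br X Y2 + b3 \<cdot>\<^sub>m lie_br X Y3"
  using assms by (simp add: lie_br_add_right[of _ n] lie_br_smult_right[of _ n])

lemma lie_br_jacobi:
  assumes "X \<in> carrier_mat n n" "Y \<in> carrier_mat n n" "Z \<in> carrier_mat n n"
  shows "lie_br X (lie_br Y Z) + lie_br Y (lie_br Z X) + lie_br Z (lie_br X Y) = 0\<^sub>m n n"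
proof -
  have expand: "lie_br A (lie_br B C) = (A * B * C - A * C * B) - (B * C * A - C * B * A)"
    if "A \<in> carrier_mat n n" "B \<in> carrier_mat n n" "C \<in> carrier_mat n n" for A B C :: "'a mat"
    using that unfolding lie_br_def
    by (simp add: mult_minus_distrib_mat[where nr=n and n=n and nc=n]
        minus_mult_distrib_mat[where nr=n and n=n and nc=n])
  show ?thesis
    using assms by (simp add: expand) (rule eq_matI; simp)
qed

lemma lie_br_span_relations_imp_zero:
  fixes U V W :: "'a::field mat"
  assumes carr: "U \<in> carrier_mat n n" "V \<in> carrier_mat n n"
    and c: "c1 \<noteq> 0" "c2 \<noteq> 0"
    and rel_U: "c1 \<cdot>\<^sub>m U + a \<cdot>\<^sub>m lie_br U V + b \<cdot>\<^sub>m lie_br U W = 0\<^sub>m n n"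
    and rel_V: "c2 \<cdot>\<^sub>m V + d \<cdot>\<^sub>m lie_br V U + e \<cdot>\<^sub>m lie_br V W = 0\<^sub>m n n"
    and W: "W = \<mu> \<cdot>\<^sub>m U + \<nu> \<cdot>\<^sub>m V"
  shows "U = 0\<^sub>m n n \<and> V = 0\<^sub>m n n \<and> W = 0\<^sub>m n n"
proof -
  define A where "A = lie_br U V"
  have A: "A \<in> carrier_mat n n"
    using carr by (simp add: A_def)
  have UW: "lie_br U W = \<nu> \<cdot>\<^sub>m A"
    using carr by (simp add: W A_def lie_br_add_right lie_br_smult_right lie_br_self)
  have VW: "lie_br V W = (- \<mu>) \<cdot>\<^sub>m A"
    using carr by (simp add: W A_def lie_br_add_right lie_br_smult_right lie_br_self lie_br_antisym[of U])
      (rule eq_matI; simp)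
  have U: "U = (- (a + b * \<nu>) / c1) \<cdot>\<^sub>m A" (is "_ = ?R")
  proof (rule eq_matI)
    fix i j assume "i < dim_row ?R" "j < dim_col ?R"
    then have ij: "i < n" "j < n" using A by auto
    have "(c1 \<cdot>\<^sub>m U + a \<cdot>\<^sub>m A + b \<cdot>\<^sub>m (\<nu> \<cdot>\<^sub>m A)) $$ (i, j) = 0"
      using rel_U ij by (simp add: UW flip: A_def)
    then show "U $$ (i, j) = ?R $$ (i, j)"
      using A carr ij c by (simp add: field_simps) (simp add: eq_neg_iff_add_eq_0 algebra_simps)
  qed (use A carr in auto)
  have V: "V = ((d + e * \<mu>) / c2) \<cdot>\<^sub>m A" (is "_ = ?R")
  proof (rule eq_matI)
    fix i j assume "i < dim_row ?R" "j < dim_col ?R"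
    then have ij: "i < n" "j < n" using A by auto
    have "(c2 \<cdot>\<^sub>m V + d \<cdot>\<^sub>m (- A) + e \<cdot>\<^sub>m ((- \<mu>) \<cdot>\<^sub>m A)) $$ (i, j) = 0"
      using rel_V ij carr by (simp add: VW lie_br_antisym[of U] flip: A_def)
    then show "V $$ (i, j) = ?R $$ (i, j)"
      using A carr ij c by (simp add: field_simps)
  qed (use A carr in auto)
  have "A = 0\<^sub>m n n"
    \<comment> \<open>both generators are multiples of their own bracket\<close>
    by (subst A_def, subst U, subst V)
      (simp add: A lie_br_smult_left[of _ n] lie_br_smult_right[of _ n] lie_br_self[OF A])
  then show ?thesis
    using U V W A by simp
qed

lemma linking_rel_carrier:
  assumes "linking_rel_holds n c l X"
  shows "X 1 \<in> carrier_mat n n" "X 2 \<in> carrier_mat n n" "X 3 \<in> carrier_mat n n"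
  using assms unfolding linking_rel_holds_def by auto

lemma linking_rel_independent:
  fixes X :: "nat \<Rightarrow> 'a::field mat"
  assumes rel: "linking_rel_holds n c l X"
    and c: "c 1 \<noteq> 0" "c 2 \<noteq> 0" "c 3 \<noteq> 0"
    and nonzero: "\<not> (X 1 = 0\<^sub>m n n \<and> X 2 = 0\<^sub>m n n \<and> X 3 = 0\<^sub>m n n)"
    and dep: "k1 \<cdot>\<^sub>m X 1 + k2 \<cdot>\<^sub>m X 2 + k3 \<cdot>\<^sub>m X 3 = 0\<^sub>m n n"
  shows "k1 = 0 \<and> k2 = 0 \<and> k3 = 0"
proof (rule ccontr)
  assume k: "\<not> (k1 = 0 \<and> k2 = 0 \<and> k3 = 0)"
  note carr = linking_rel_carrier[OF rel]
  note rels = rel[unfolded linking_rel_holds_def, THEN conjunct2]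
  have swap: "k1 \<cdot>\<^sub>m X 1 + k3 \<cdot>\<^sub>m X 3 + k2 \<cdot>\<^sub>m X 2 = 0\<^sub>m n n"
    "k2 \<cdot>\<^sub>m X 2 + k3 \<cdot>\<^sub>m X 3 + k1 \<cdot>\<^sub>m X 1 = 0\<^sub>m n n"
    using dep carr add_mat_swap_right[of "k1 \<cdot>\<^sub>m X 1" n n "k2 \<cdot>\<^sub>m X 2" "k3 \<cdot>\<^sub>m X 3"]
      add_mat_rotate[of "k1 \<cdot>\<^sub>m X 1" n n "k2 \<cdot>\<^sub>m X 2" "k3 \<cdot>\<^sub>m X 3"] by simp_all
  have rels_swap:
    "c 1 \<cdot>\<^sub>m X 1 + l 1 3 \<cdot>\<^sub>m lie_br (X 1) (X 3) + l 1 2 \<cdot>\<^sub>m lie_br (X 1) (X 2) = 0\<^sub>m n n"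
    "c 2 \<cdot>\<^sub>m X 2 + l 2 3 \<cdot>\<^sub>m lie_br (X 2) (X 3) + l 2 1 \<cdot>\<^sub>m lie_br (X 2) (X 1) = 0\<^sub>m n n"
    "c 3 \<cdot>\<^sub>m X 3 + l 3 2 \<cdot>\<^sub>m lie_br (X 3) (X 2) + l 3 1 \<cdot>\<^sub>m lie_br (X 3) (X 1) = 0\<^sub>m n n"
    using rels carr by (simp_all add: add_mat_swap_right[of _ n n])
  consider "k3 \<noteq> 0" | "k2 \<noteq> 0" | "k1 \<noteq> 0" using k by blast
  then have "X 1 = 0\<^sub>m n n \<and> X 2 = 0\<^sub>m n n \<and> X 3 = 0\<^sub>m n n"
  proof cases
    case 1
    then show ?thesis
      using lie_br_span_relations_imp_zero[OF carr(1,2) c(1,2) _ _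
          smult_add3_eq_zero_solve[OF carr dep 1]] rels by blast
  next
    case 2
    then show ?thesis
      using lie_br_span_relations_imp_zero[OF carr(1,3) c(1,3) rels_swap(1) _
          smult_add3_eq_zero_solve[OF carr(1,3,2) swap(1) 2]] rels by blast
  next
    case 3
    then show ?thesis
      using lie_br_span_relations_imp_zero[OF carr(2,3) c(2,3) rels_swap(2,3)
          smult_add3_eq_zero_solve[OF carr(2,3,1) swap(2) 3]] by blast
  qed
  with nonzero show False ..
qed

text \<open>Up to sign, the determinant of the system expressing \<open>c\<^sub>i X\<^sub>i\<close> through the brackets
  \<open>[X\<^sub>1,X\<^sub>2], [X\<^sub>2,X\<^sub>3], [X\<^sub>3,X\<^sub>1]\<close>.\<close>

definition linking_det :: "(nat \<Rightarrow> nat \<Rightarrow> 'a::comm_ring) \<Rightarrow> 'a" where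
  "linking_det l = l 1 3 * l 2 1 * l 3 2 - l 1 2 * l 2 3 * l 3 1"

lemma linking_system_solution:
  fixes c1 c2 c3 l12 l13 l21 l23 l31 l32 x1 x2 x3 a b cc :: "'a::comm_ring"
  assumes e1: "c1 * x1 + l12 * a - l13 * cc = 0" and e2: "c2 * x2 - l21 * a + l23 * b = 0"
    and e3: "c3 * x3 + l31 * cc - l32 * b = 0"
  shows "(l13 * l21 * l32 - l12 * l23 * l31) * a =
      l23 * l31 * c1 * x1 + l13 * l32 * c2 * x2 + l13 * l23 * c3 * x3" (is "?D * _ = ?A")
    "(l13 * l21 * l32 - l12 * l23 * l31) * b =
      l21 * l31 * c1 * x1 + l12 * l31 * c2 * x2 + l13 * l21 * c3 * x3" (is "_ = ?B")
    "(l13 * l21 * l32 - l12 * l23 * l31) * cc =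
      l21 * l32 * c1 * x1 + l12 * l32 * c2 * x2 + l12 * l23 * c3 * x3" (is "_ = ?C")
proof -
  have "?D * a = ?A - (l23 * l31 * (c1 * x1 + l12 * a - l13 * cc)
      + l13 * l32 * (c2 * x2 - l21 * a + l23 * b) + l13 * l23 * (c3 * x3 + l31 * cc - l32 * b))"
    by (simp add: algebra_simps)
  moreover have "?D * b = ?B - (l21 * l31 * (c1 * x1 + l12 * a - l13 * cc)
      + l12 * l31 * (c2 * x2 - l21 * a + l23 * b) + l13 * l21 * (c3 * x3 + l31 * cc - l32 * b))"
    by (simp add: algebra_simps)
  moreover have "?D * cc = ?C - (l21 * l32 * (c1 * x1 + l12 * a - l13 * cc)
      + l12 * l32 * (c2 * x2 - l21 * a + l23 * b) + l12 * l23 * (c3 * x3 + l31 * cc - l32 * b))"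
    by (simp add: algebra_simps)
  ultimately show "?D * a = ?A" "?D * b = ?B" "?D * cc = ?C"
    unfolding e1 e2 e3 by simp_all
qed

lemma linking_rel_bracket_solution:
  fixes X :: "nat \<Rightarrow> 'a::field mat"
  assumes rel: "linking_rel_holds n c l X"
  shows "linking_det l \<cdot>\<^sub>m lie_br (X 1) (X 2) =
      (l 2 3 * l 3 1 * c 1) \<cdot>\<^sub>m X 1 + (l 1 3 * l 3 2 * c 2) \<cdot>\<^sub>m X 2 + (l 1 3 * l 2 3 * c 3) \<cdot>\<^sub>m X 3"
      (is ?A)
    "linking_det l \<cdot>\<^sub>m lie_br (X 2) (X 3) =
      (l 2 1 * l 3 1 * c 1) \<cdot>\<^sub>m X 1 + (l 1 2 * l 3 1 * c 2) \<cdot>\<^sub>m X 2 + (l 1 3 * l 2 1 * c 3) \<cdot>\<^sub>m X 3"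
      (is ?B)
    "linking_det l \<cdot>\<^sub>m lie_br (X 3) (X 1) =
      (l 2 1 * l 3 2 * c 1) \<cdot>\<^sub>m X 1 + (l 1 2 * l 3 2 * c 2) \<cdot>\<^sub>m X 2 + (l 1 2 * l 2 3 * c 3) \<cdot>\<^sub>m X 3"
      (is ?C)
proof -
  note carr = linking_rel_carrier[OF rel]
  have rels:
    "c 1 \<cdot>\<^sub>m X 1 + l 1 2 \<cdot>\<^sub>m lie_br (X 1) (X 2) + l 1 3 \<cdot>\<^sub>m - lie_br (X 3) (X 1) = 0\<^sub>m n n"
    "c 2 \<cdot>\<^sub>m X 2 + l 2 1 \<cdot>\<^sub>m - lie_br (X 1) (X 2) + l 2 3 \<cdot>\<^sub>m lie_br (X 2) (X 3) = 0\<^sub>m n n"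
    "c 3 \<cdot>\<^sub>m X 3 + l 3 1 \<cdot>\<^sub>m lie_br (X 3) (X 1) + l 3 2 \<cdot>\<^sub>m - lie_br (X 2) (X 3) = 0\<^sub>m n n"
    using rel unfolding linking_rel_holds_def lie_br_antisym[OF carr(3,1)] lie_br_antisym[OF carr(1,2)]
      lie_br_antisym[OF carr(2,3)] by simp_all
  have entries:
    "c 1 * X 1 $$ (i, j) + l 1 2 * lie_br (X 1) (X 2) $$ (i, j) - l 1 3 * lie_br (X 3) (X 1) $$ (i, j) = 0"
    "c 2 * X 2 $$ (i, j) - l 2 1 * lie_br (X 1) (X 2) $$ (i, j) + l 2 3 * lie_br (X 2) (X 3) $$ (i, j) = 0"
    "c 3 * X 3 $$ (i, j) + l 3 1 * lie_br (X 3) (X 1) $$ (i, j) - l 3 2 * lie_br (X 2) (X 3) $$ (i, j) = 0"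
    if "i < n" "j < n" for i j
    using rels[THEN arg_cong[where f = "\<lambda>M. M $$ (i, j)"]] carr that by simp_all
  have "linking_det l * lie_br (X 1) (X 2) $$ (i, j) =
      l 2 3 * l 3 1 * c 1 * X 1 $$ (i, j) + l 1 3 * l 3 2 * c 2 * X 2 $$ (i, j) + l 1 3 * l 2 3 * c 3 * X 3 $$ (i, j)"
    "linking_det l * lie_br (X 2) (X 3) $$ (i, j) =
      l 2 1 * l 3 1 * c 1 * X 1 $$ (i, j) + l 1 2 * l 3 1 * c 2 * X 2 $$ (i, j) + l 1 3 * l 2 1 * c 3 * X 3 $$ (i, j)"
    "linking_det l * lie_br (X 3) (X 1) $$ (i, j) =
      l 2 1 * l 3 2 * c 1 * X 1 $$ (i, j) + l 1 2 * l 3 2 * c 2 * X 2 $$ (i, j) + l 1 2 * l 2 3 * c 3 * X 3 $$ (i, j)"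
    if "i < n" "j < n" for i j
    using linking_system_solution[OF entries[OF that]] unfolding linking_det_def by simp_all
  then show ?A ?B ?C
    using carr by (auto intro!: eq_matI simp: mult.assoc)
qed

lemma linking_rel_jacobi_relation:
  fixes X :: "nat \<Rightarrow> 'a::field mat"
  assumes rel: "linking_rel_holds n c l X"
  shows "(l 1 2 * l 3 1 * c 2 - l 2 1 * l 3 2 * c 1) \<cdot>\<^sub>m lie_br (X 1) (X 2)
    + (l 1 2 * l 2 3 * c 3 - l 1 3 * l 3 2 * c 2) \<cdot>\<^sub>m lie_br (X 2) (X 3)
    + (l 2 3 * l 3 1 * c 1 - l 1 3 * l 2 1 * c 3) \<cdot>\<^sub>m lie_br (X 3) (X 1) = 0\<^sub>m n n"
    (is "?M = _")
proof -
  note carr = linking_rel_carrier[OF rel]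
  note sol = linking_rel_bracket_solution[OF rel]
  define D where "D = linking_det l"
  have "D \<cdot>\<^sub>m lie_br (X 1) (lie_br (X 2) (X 3)) + D \<cdot>\<^sub>m lie_br (X 2) (lie_br (X 3) (X 1))
      + D \<cdot>\<^sub>m lie_br (X 3) (lie_br (X 1) (X 2)) = 0\<^sub>m n n"
    using lie_br_jacobi[OF carr] carr
    by (simp add: add_smult_distrib_left_mat[symmetric, of _ n n])
  then have "lie_br (X 1) (D \<cdot>\<^sub>m lie_br (X 2) (X 3)) + lie_br (X 2) (D \<cdot>\<^sub>m lie_br (X 3) (X 1))
      + lie_br (X 3) (D \<cdot>\<^sub>m lie_br (X 1) (X 2)) = 0\<^sub>m n n"
    using carr by (simp add: lie_br_smult_right)
  then have jac: "(l 2 1 * l 3 1 * c 1) \<cdot>\<^sub>m lie_br (X 1) (X 1) + (l 1 2 * l 3 1 * c 2) \<cdot>\<^sub>m lie_br (X 1) (X 2)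
        + (l 1 3 * l 2 1 * c 3) \<cdot>\<^sub>m - lie_br (X 3) (X 1)
      + ((l 2 1 * l 3 2 * c 1) \<cdot>\<^sub>m - lie_br (X 1) (X 2) + (l 1 2 * l 3 2 * c 2) \<cdot>\<^sub>m lie_br (X 2) (X 2)
        + (l 1 2 * l 2 3 * c 3) \<cdot>\<^sub>m lie_br (X 2) (X 3))
      + ((l 2 3 * l 3 1 * c 1) \<cdot>\<^sub>m lie_br (X 3) (X 1) + (l 1 3 * l 3 2 * c 2) \<cdot>\<^sub>m - lie_br (X 2) (X 3)
        + (l 1 3 * l 2 3 * c 3) \<cdot>\<^sub>m lie_br (X 3) (X 3)) = 0\<^sub>m n n"
    unfolding D_def sol lie_br_lin_comb_right[OF carr(1) carr] lie_br_lin_comb_right[OF carr(2) carr]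
      lie_br_lin_comb_right[OF carr(3) carr]
    unfolding lie_br_antisym[OF carr(3,1)] lie_br_antisym[OF carr(1,2)] lie_br_antisym[OF carr(2,3)] .
  show ?thesis
  proof (rule eq_matI)
    fix i j assume "i < dim_row (0\<^sub>m n n :: 'a mat)" "j < dim_col (0\<^sub>m n n :: 'a mat)"
    then have ij: "i < n" "j < n" by auto
    show "?M $$ (i, j) = 0\<^sub>m n n $$ (i, j)"
      using jac[THEN arg_cong[where f = "\<lambda>M. M $$ (i, j)"]] carr ij
      by (simp add: lie_br_self algebra_simps)
  qed (use carr in auto)
qed

lemma linking_rel_nonzero_det:
  fixes X :: "nat \<Rightarrow> 'a::field mat"
  assumes rel: "linking_rel_holds n c l X"
    and c: "c 1 \<noteq> 0" "c 2 \<noteq> 0" "c 3 \<noteq> 0"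
    and nonzero: "\<not> (X 1 = 0\<^sub>m n n \<and> X 2 = 0\<^sub>m n n \<and> X 3 = 0\<^sub>m n n)"
  shows "linking_det l \<noteq> 0"
proof
  assume D: "linking_det l = 0"
  note carr = linking_rel_carrier[OF rel]
  note indep = linking_rel_independent[OF rel c nonzero]
  have "(l 2 3 * l 3 1 * c 1) \<cdot>\<^sub>m X 1 + (l 1 3 * l 3 2 * c 2) \<cdot>\<^sub>m X 2
      + (l 1 3 * l 2 3 * c 3) \<cdot>\<^sub>m X 3 = 0\<^sub>m n n"
    "(l 2 1 * l 3 1 * c 1) \<cdot>\<^sub>m X 1 + (l 1 2 * l 3 1 * c 2) \<cdot>\<^sub>m X 2
      + (l 1 3 * l 2 1 * c 3) \<cdot>\<^sub>m X 3 = 0\<^sub>m n n"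
    "(l 2 1 * l 3 2 * c 1) \<cdot>\<^sub>m X 1 + (l 1 2 * l 3 2 * c 2) \<cdot>\<^sub>m X 2
      + (l 1 2 * l 2 3 * c 3) \<cdot>\<^sub>m X 3 = 0\<^sub>m n n"
    using linking_rel_bracket_solution[OF rel] carr by (simp_all add: D zero_smult_mat[of _ n n])
  from indep[OF this(1)] indep[OF this(2)] indep[OF this(3)] c
  have "(l 1 2 = 0 \<and> l 1 3 = 0) \<or> (l 2 1 = 0 \<and> l 2 3 = 0) \<or> (l 3 1 = 0 \<and> l 3 2 = 0)"
    by auto
  then have "c 1 \<cdot>\<^sub>m X 1 + 0 \<cdot>\<^sub>m X 2 + 0 \<cdot>\<^sub>m X 3 = 0\<^sub>m n n \<or>
      0 \<cdot>\<^sub>m X 1 + c 2 \<cdot>\<^sub>m X 2 + 0 \<cdot>\<^sub>m X 3 = 0\<^sub>m n n \<or>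
      0 \<cdot>\<^sub>m X 1 + 0 \<cdot>\<^sub>m X 2 + c 3 \<cdot>\<^sub>m X 3 = 0\<^sub>m n n"
    using rel carr unfolding linking_rel_holds_def by (auto simp: zero_smult_mat[of _ n n])
  with c show False
    using indep by blast
qed

lemma linking_rel_nonzero_jacobi_coeffs:
  fixes X :: "nat \<Rightarrow> 'a::field mat"
  assumes rel: "linking_rel_holds n c l X"
    and c: "c 1 \<noteq> 0" "c 2 \<noteq> 0" "c 3 \<noteq> 0"
    and nonzero: "\<not> (X 1 = 0\<^sub>m n n \<and> X 2 = 0\<^sub>m n n \<and> X 3 = 0\<^sub>m n n)"
  shows "l 1 2 * l 3 1 * c 2 = l 2 1 * l 3 2 * c 1" "l 1 2 * l 2 3 * c 3 = l 1 3 * l 3 2 * c 2"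
    "l 2 3 * l 3 1 * c 1 = l 1 3 * l 2 1 * c 3"
proof -
  note carr = linking_rel_carrier[OF rel]
  define D where "D = linking_det l"
  define j1 where "j1 = l 1 2 * l 3 1 * c 2 - l 2 1 * l 3 2 * c 1"
  define j2 where "j2 = l 1 2 * l 2 3 * c 3 - l 1 3 * l 3 2 * c 2"
  define j3 where "j3 = l 2 3 * l 3 1 * c 1 - l 1 3 * l 2 1 * c 3"
  define m1 where "m1 = j1 * l 2 3 * l 3 1 + j2 * l 2 1 * l 3 1 + j3 * l 2 1 * l 3 2"
  define m2 where "m2 = j1 * l 1 3 * l 3 2 + j2 * l 1 2 * l 3 1 + j3 * l 1 2 * l 3 2"
  define m3 where "m3 = j1 * l 1 3 * l 2 3 + j2 * l 1 3 * l 2 1 + j3 * l 1 2 * l 2 3"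
  \<comment> \<open>multiplying the Jacobi relation by the determinant expresses it through the generators\<close>
  have "(c 1 * m1) \<cdot>\<^sub>m X 1 + (c 2 * m2) \<cdot>\<^sub>m X 2 + (c 3 * m3) \<cdot>\<^sub>m X 3 = 0\<^sub>m n n"
  proof (rule eq_matI)
    fix i j assume "i < dim_row (0\<^sub>m n n :: 'a mat)" "j < dim_col (0\<^sub>m n n :: 'a mat)"
    then have ij: "i < n" "j < n" by auto
    have "D * (j1 * lie_br (X 1) (X 2) $$ (i, j) + j2 * lie_br (X 2) (X 3) $$ (i, j)
        + j3 * lie_br (X 3) (X 1) $$ (i, j)) = 0"
      using linking_rel_jacobi_relation[OF rel, THEN arg_cong[where f = "\<lambda>M. M $$ (i, j)"]] carr ij
      by (simp add: j1_def j2_def j3_def)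
    moreover have "D * (j1 * lie_br (X 1) (X 2) $$ (i, j) + j2 * lie_br (X 2) (X 3) $$ (i, j)
        + j3 * lie_br (X 3) (X 1) $$ (i, j)) =
      j1 * (D * lie_br (X 1) (X 2) $$ (i, j)) + j2 * (D * lie_br (X 2) (X 3) $$ (i, j))
        + j3 * (D * lie_br (X 3) (X 1) $$ (i, j))"
      by (simp add: algebra_simps)
    ultimately show "((c 1 * m1) \<cdot>\<^sub>m X 1 + (c 2 * m2) \<cdot>\<^sub>m X 2 + (c 3 * m3) \<cdot>\<^sub>m X 3) $$ (i, j) =
        0\<^sub>m n n $$ (i, j)"
      using linking_rel_bracket_solution[OF rel, THEN arg_cong[where f = "\<lambda>M. M $$ (i, j)"]] carr ij
      by (simp add: D_def m1_def m2_def m3_def algebra_simps)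
  qed (use carr in auto)
  then have "c 1 * m1 = 0 \<and> c 2 * m2 = 0 \<and> c 3 * m3 = 0"
    by (rule linking_rel_independent[OF rel c nonzero])
  with c have "m1 = 0" "m2 = 0" "m3 = 0"
    by simp_all
  moreover have "D * j1 = - l 1 2 * m1 + l 2 1 * m2" "D * j2 = - l 2 3 * m2 + l 3 2 * m3"
    "D * j3 = l 1 3 * m1 - l 3 1 * m3"
    unfolding D_def linking_det_def m1_def m2_def m3_def by (simp_all add: algebra_simps)
  ultimately show "l 1 2 * l 3 1 * c 2 = l 2 1 * l 3 2 * c 1" "l 1 2 * l 2 3 * c 3 = l 1 3 * l 3 2 * c 2"
    "l 2 3 * l 3 1 * c 1 = l 1 3 * l 2 1 * c 3"
    using linking_rel_nonzero_det[OF rel c nonzero] by (simp_all add: D_def j1_def j2_def j3_def)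
qed

definition linking_ratio_condition ::
  "(nat \<Rightarrow> 'a::field) \<Rightarrow> (nat \<Rightarrow> nat \<Rightarrow> 'a) \<Rightarrow> bool" where
  "linking_ratio_condition c l \<longleftrightarrow>
     (\<forall>i\<in>{1,2,3}. \<forall>j\<in>{1,2,3}. i \<noteq> j \<longrightarrow> l i j \<noteq> 0) \<and>
     l 1 3 / c 1 = - l 2 3 / c 2 \<and> l 2 1 / c 2 = - l 3 1 / c 3 \<and> l 1 2 / c 1 = - l 3 2 / c 3"

lemma linking_ratio_condition_if_jacobi_coeffs_vanish:
  fixes c :: "nat \<Rightarrow> 'a::field"
  assumes D: "linking_det l \<noteq> 0"
    and e1: "l 1 2 * l 3 1 * c 2 = l 2 1 * l 3 2 * c 1"
    and e2: "l 1 2 * l 2 3 * c 3 = l 1 3 * l 3 2 * c 2"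
    and e3: "l 2 3 * l 3 1 * c 1 = l 1 3 * l 2 1 * c 3"
    and c: "c 1 \<noteq> 0" "c 2 \<noteq> 0" "c 3 \<noteq> 0"
  shows "linking_ratio_condition c l"
proof -
  have nonzero: "l 1 2 \<noteq> 0" "l 1 3 \<noteq> 0" "l 2 1 \<noteq> 0" "l 2 3 \<noteq> 0" "l 3 1 \<noteq> 0" "l 3 2 \<noteq> 0"
    using D e1 e2 e3 c by (auto simp: linking_det_def)
  define P where "P = l 1 2 * l 2 3 * l 3 1"
  define Q where "Q = l 1 3 * l 2 1 * l 3 2"
  have "c 1 * c 2 * c 3 * (P * P) = (l 1 2 * l 3 1 * c 2) * (l 1 2 * l 2 3 * c 3) * (l 2 3 * l 3 1 * c 1)"
    by (simp add: P_def algebra_simps)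
  also have "\<dots> = (l 2 1 * l 3 2 * c 1) * (l 1 3 * l 3 2 * c 2) * (l 1 3 * l 2 1 * c 3)"
    using e1 e2 e3 by simp
  also have "\<dots> = c 1 * c 2 * c 3 * (Q * Q)"
    by (simp add: Q_def algebra_simps)
  finally have "(Q - P) * (P + Q) = 0"
    using c by (simp add: algebra_simps)
  moreover have "Q - P \<noteq> 0"
    using D by (simp add: linking_det_def P_def Q_def)
  ultimately have PQ: "P + Q = 0"
    by simp
  have "l 1 2 * l 3 1 * (c 2 * l 1 3 + c 1 * l 2 3) = c 1 * (P + Q)"
    using e1 by (simp add: P_def Q_def algebra_simps)
  moreover have "l 1 2 * l 2 3 * (c 3 * l 2 1 + c 2 * l 3 1) = c 2 * (P + Q)"
    using e2 by (simp add: P_def Q_def algebra_simps)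
  moreover have "l 2 3 * l 3 1 * (c 3 * l 1 2 + c 1 * l 3 2) = c 3 * (P + Q)"
    using e3 by (simp add: P_def Q_def algebra_simps)
  ultimately have "c 2 * l 1 3 = - (c 1 * l 2 3)" "c 3 * l 2 1 = - (c 2 * l 3 1)" "c 3 * l 1 2 = - (c 1 * l 3 2)"
    using PQ nonzero by (simp_all add: eq_neg_iff_add_eq_0)
  then show ?thesis
    unfolding linking_ratio_condition_def using nonzero c by (auto simp: field_simps)
qed

lemma linking_rel_nonzero_imp_ratio_condition:
  fixes X :: "nat \<Rightarrow> 'a::field mat"
  assumes rel: "linking_rel_holds n c l X"
    and c: "c 1 \<noteq> 0" "c 2 \<noteq> 0" "c 3 \<noteq> 0"
    and nonzero: "\<not> (X 1 = 0\<^sub>m n n \<and> X 2 = 0\<^sub>m n n \<and> X 3 = 0\<^sub>m n n)"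
  shows "linking_ratio_condition c l"
  using linking_ratio_condition_if_jacobi_coeffs_vanish[OF linking_rel_nonzero_det[OF assms]
      linking_rel_nonzero_jacobi_coeffs[OF assms] c] .

definition corner_mat :: "nat \<Rightarrow> 'a::zero \<Rightarrow> 'a \<Rightarrow> 'a \<Rightarrow> 'a \<Rightarrow> 'a mat" where
  "corner_mat n a b c d = mat n n (\<lambda>(i, j).
     if i = 0 \<and> j = 0 then a else if i = 0 \<and> j = 1 then b
     else if i = 1 \<and> j = 0 then c else if i = 1 \<and> j = 1 then d else 0)"

lemma corner_mat_carrier [simp]: "corner_mat n a b c d \<in> carrier_mat n n"
  unfolding corner_mat_def by simp

lemma dim_corner_mat [simp]:
  "dim_row (corner_mat n a b c d) = n" "dim_col (corner_mat n a b c d) = n"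
  unfolding corner_mat_def by simp_all

lemma corner_mat_add:
  "corner_mat n a b c d + corner_mat n a' b' c' d' = corner_mat n (a + a') (b + b') (c + c') (d + (d' :: 'a::monoid_add))"
  unfolding corner_mat_def by (rule eq_matI) auto

lemma corner_mat_minus:
  "corner_mat n a b c d - corner_mat n a' b' c' d' = corner_mat n (a - a') (b - b') (c - c') (d - (d' :: 'a::group_add))"
  unfolding corner_mat_def by (rule eq_matI) auto

lemma corner_mat_smult:
  "k \<cdot>\<^sub>m corner_mat n a b c d = corner_mat n (k * a) (k * b) (k * c) (k * (d :: 'a::mult_zero))"
  unfolding corner_mat_def by (rule eq_matI) auto

lemma corner_mat_eq_zero_iff:
  assumes "2 \<le> n"
  shows "corner_mat n a b c d = 0\<^sub>m n n \<longleftrightarrow> a = 0 \<and> b = 0 \<and> c = 0 \<and> d = 0"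
proof
  assume "corner_mat n a b c d = 0\<^sub>m n n"
  then have "corner_mat n a b c d $$ (i, j) = 0" if "i < 2" "j < 2" for i j
    using assms that by simp
  from this[of 0 0] this[of 0 1] this[of 1 0] this[of 1 1]
  show "a = 0 \<and> b = 0 \<and> c = 0 \<and> d = 0"
    using assms unfolding corner_mat_def by auto
qed (auto simp: corner_mat_def intro!: eq_matI)

lemma corner_mat_mult:
  assumes n: "2 \<le> n"
  shows "corner_mat n a b c d * corner_mat n a' b' c' d' =
    corner_mat n (a * a' + b * c') (a * b' + b * d') (c * a' + d * c') (c * b' + (d :: 'a::semiring_0) * d')"
    (is "?M * ?M' = ?R")
proof (rule eq_matI)
  fix i j assume "i < dim_row ?R" "j < dim_col ?R"
  then have ij: "i < n" "j < n" by auto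
  have "(?M * ?M') $$ (i, j) = (\<Sum>k\<in>{0..<n}. ?M $$ (i, k) * ?M' $$ (k, j))"
    using ij by (simp add: scalar_prod_def)
  also have "\<dots> = (\<Sum>k\<in>{0..<2}. ?M $$ (i, k) * ?M' $$ (k, j))"
    using n ij by (intro sum.mono_neutral_right) (auto simp: corner_mat_def)
  also have "\<dots> = ?R $$ (i, j)"
    using ij n by (auto simp: corner_mat_def numeral_2_eq_2)
  finally show "(?M * ?M') $$ (i, j) = ?R $$ (i, j)" .
qed auto

lemma lie_br_corner_mat:
  assumes "2 \<le> n"
  shows "lie_br (corner_mat n a b c d) (corner_mat n a' b' c' d') =
    corner_mat n (b * c' - b' * c) (a * b' + b * d' - (a' * b + b' * d))
      (c * a' + d * c' - (c' * a + d' * c)) (c * b' - c' * (b :: 'a::comm_ring))"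
  unfolding lie_br_def corner_mat_mult[OF assms] corner_mat_minus by (simp add: algebra_simps)

lemma linking_ratio_condition_imp_not_FM:
  fixes c :: "nat \<Rightarrow> 'a::field"
  assumes n: "2 \<le> n" and two: "(2::'a) \<noteq> 0" and c: "c 1 \<noteq> 0" "c 2 \<noteq> 0" "c 3 \<noteq> 0"
    and cond: "linking_ratio_condition c l"
  shows "\<not> linking_algebra_FM n c l"
proof -
  define \<alpha> where "\<alpha> = l 1 3 / c 1"
  define \<beta> where "\<beta> = l 2 1 / c 2"
  define \<gamma> where "\<gamma> = l 1 2 / c 1"
  have nz: "\<alpha> \<noteq> 0" "\<beta> \<noteq> 0" "\<gamma> \<noteq> 0"
    using cond c unfolding linking_ratio_condition_def \<alpha>_def \<beta>_def \<gamma>_def by auto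
  have L: "l 1 3 = \<alpha> * c 1" "l 2 3 = - (\<alpha> * c 2)" "l 2 1 = \<beta> * c 2" "l 3 1 = - (\<beta> * c 3)"
    "l 1 2 = \<gamma> * c 1" "l 3 2 = - (\<gamma> * c 3)"
    using cond c unfolding linking_ratio_condition_def \<alpha>_def \<beta>_def \<gamma>_def by (auto simp: field_simps)
  define b where "b = 1 / (4 * \<beta> * \<gamma>)"
  define u where "u = 1 / (2 * \<alpha>)"
  define v where "v = \<beta> / \<alpha>"
  define w where "w = - (\<gamma> * b / \<alpha>)"
  \<comment> \<open>a copy of \<open>sl\<^sub>2\<close> in the upper left corner\<close>
  define X where "X = (\<lambda>i::nat. if i = 1 then corner_mat n 0 1 0 0 else if i = 2 then corner_mat n 0 0 b 0
      else corner_mat n u v w (- u))"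
  have four_eight: "(4::'a) \<noteq> 0" "(8::'a) \<noteq> 0"
    using two mult_eq_0_iff[of "2::'a" 2] mult_eq_0_iff[of "4::'a" 2] by simp_all
  have "linking_rel_holds n c l X"
    unfolding linking_rel_holds_def X_def L using nz c two four_eight
    by (simp add: lie_br_corner_mat[OF n] corner_mat_smult corner_mat_add corner_mat_eq_zero_iff[OF n]
        u_def v_def w_def b_def field_simps)
  moreover have "X 1 \<noteq> 0\<^sub>m n n"
    unfolding X_def by (simp add: corner_mat_eq_zero_iff[OF n])
  ultimately show ?thesis
    unfolding linking_algebra_FM_def by blast
qed

lemma linking_algebra_not_FM_iff:
  fixes c :: "nat \<Rightarrow> 'a::field"
  assumes n: "2 \<le> n" and two: "(2::'a) \<noteq> 0" and c: "c 1 \<noteq> 0" "c 2 \<noteq> 0" "c 3 \<noteq> 0"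
  shows "\<not> linking_algebra_FM n c l \<longleftrightarrow> linking_ratio_condition c l"
proof
  assume "\<not> linking_algebra_FM n c l"
  then obtain X where "linking_rel_holds n c l X" "\<not> (X 1 = 0\<^sub>m n n \<and> X 2 = 0\<^sub>m n n \<and> X 3 = 0\<^sub>m n n)"
    unfolding linking_algebra_FM_def by auto
  then show "linking_ratio_condition c l"
    using linking_rel_nonzero_imp_ratio_condition c by blast
qed (rule linking_ratio_condition_imp_not_FM[OF n two c])

lemma of_nat_div_card_mod_ring_nonzero:
  assumes cong: "[m = 1] (mod CARD('p))" and not_cong: "\<not> [m = 1] (mod CARD('p)^2)"
  shows "(of_nat ((m - 1) div CARD('p)) :: 'p::prime_card mod_ring) \<noteq> 0"
proof
  assume "(of_nat ((m - 1) div CARD('p)) :: 'p mod_ring) = 0"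
  then have "CARD('p) dvd (m - 1) div CARD('p)"
    by (rule of_nat_0_mod_ring_dvd)
  moreover have "m \<ge> 1"
    using cong prime_ge_2_nat[OF prime_card[where 'a = 'p]] by (cases m) (auto simp: cong_def)
  then have "CARD('p) dvd m - 1"
    using cong by (simp add: cong_altdef_nat)
  ultimately have "CARD('p) * CARD('p) dvd m - 1"
    by (metis dvd_mult_div_cancel mult_dvd_mono dvd_refl)
  with \<open>m \<ge> 1\<close> not_cong show False
    by (simp add: cong_altdef_nat power2_eq_square)
qed

lemma two_mod_ring_nonzero:
  assumes "odd CARD('p::prime_card)"
  shows "(2::'p mod_ring) \<noteq> 0"
proof
  assume "(2::'p mod_ring) = 0"
  then have "CARD('p) dvd 2"
    using of_nat_0_mod_ring_dvd[of 2] by simp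
  then have "CARD('p) \<le> 2"
    by (rule dvd_imp_le) simp
  with prime_ge_2_nat[OF prime_card[where 'a = 'p]] have "CARD('p) = 2"
    by linarith
  with assms show False
    by simp
qed

theorem theorem1p7:
  fixes q :: "nat \<Rightarrow> nat" and g :: "nat \<Rightarrow> nat" and n :: nat
    and l :: "nat \<Rightarrow> nat \<Rightarrow> 'p::prime_card mod_ring"
  defines "p \<equiv> CARD('p)"
  assumes p_odd: "odd p"
    and q_prime: "\<forall>i\<in>{1,2,3}. prime (q i)"
    and q_dist: "q 1 \<noteq> q 2" "q 1 \<noteq> q 3" "q 2 \<noteq> q 3"
    and q_cong1: "\<forall>i\<in>{1,2,3}. [q i = 1] (mod p)"
    and q_ncong2: "\<forall>i\<in>{1,2,3}. \<not> [q i = 1] (mod p^2)"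
    and g_prim: "\<forall>j\<in>{1,2,3}. residue_primroot (q j) (g j)"
    and l_def: "\<forall>i\<in>{1,2,3}. \<forall>j\<in>{1,2,3}. i \<noteq> j \<longrightarrow>
                  (\<exists>e::nat. [q i * g j ^ e = 1] (mod q j) \<and> l i j = of_nat e)"
    and n_ge: "2 \<le> n" and n_lt: "n < p"
  shows "\<not> linking_algebra_FM n (\<lambda>i. of_nat ((q i - 1) div p)) l \<longleftrightarrow>
           (\<forall>i\<in>{1,2,3}. \<forall>j\<in>{1,2,3}. i \<noteq> j \<longrightarrow> l i j \<noteq> 0) \<and>
           l 1 3 / of_nat ((q 1 - 1) div p) = - l 2 3 / of_nat ((q 2 - 1) div p) \<and>
           l 2 1 / of_nat ((q 2 - 1) div p) = - l 3 1 / of_nat ((q 3 - 1) div p) \<and>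
           l 1 2 / of_nat ((q 1 - 1) div p) = - l 3 2 / of_nat ((q 3 - 1) div p)"
proof -
  define c where "c = (\<lambda>i. of_nat ((q i - 1) div p) :: 'p mod_ring)"
  have "c i \<noteq> 0" if "i \<in> {1,2,3}" for i
    using q_cong1[rule_format, OF that] q_ncong2[rule_format, OF that]
    unfolding c_def p_def by (rule of_nat_div_card_mod_ring_nonzero)
  moreover have "(2::'p mod_ring) \<noteq> 0"
    using p_odd unfolding p_def by (rule two_mod_ring_nonzero)
  ultimately have "\<not> linking_algebra_FM n c l \<longleftrightarrow> linking_ratio_condition c l"
    using n_ge by (intro linking_algebra_not_FM_iff) auto
  then show ?thesis
    unfolding c_def linking_ratio_condition_def .
qed

end
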